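(* Let $U_1=\ln Z_1-H_M(\underline\theta)$. Then for every $\underline\theta\in\Theta$, $$\mathbb E_{\underline\theta}(U_1)=\int_0^\infty\ln(z)\,[1-G_\alpha(\rho z)]\,g_\alpha(z)\,dz+\int_0^\infty\ln(z)\left[1-G_\alpha\!\left(\frac{z}{\rho}\right)\right]g_\alpha(z)\,dz,$$ where $\rho=\min\{\theta_1,\theta_2\}/\max\{\theta_1,\theta_2\}\in(0,1]$.
   Context: Fix a known $\alpha>0$. $X_1,X_2$ are independent, $X_i$ having density $f(x\mid\theta_i)=\frac{x^{\alpha-1}e^{-x/\theta_i}}{\Gamma(\alpha)\theta_i^{\alpha}}$, $x>0$, with unknown $\underline\theta=(\theta_1,\theta_2)\in\Theta=(0,\infty)^2$. $Z_1=\min\{X_1,X_2\}$, $Z_2=\max\{X_1,X_2\}$. The selected better entropy (up to an additive constant) is $H_M(\underline\theta)=\ln\theta_1\, I(X_1\le X_2)+\ln\theta_2\, I(X_1>X_2)$. $G_\alpha,g_\alpha$ are the distribution function and density of the gamma distribution with shape $\alpha$, scale $1$. *)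

theory Defs
  imports "HOL-Probability.Probability"
begin

definition gamma_dens :: "real \<Rightarrow> real \<Rightarrow> real \<Rightarrow> real" where
  "gamma_dens a th x =
     (if x > 0 then x powr (a - 1) * exp (- x / th) / (Gamma a * th powr a) else 0)"

definition g_alpha :: "real \<Rightarrow> real \<Rightarrow> real" where
  "g_alpha a x = gamma_dens a 1 x"

definition G_alpha :: "real \<Rightarrow> real \<Rightarrow> real" where
  "G_alpha a x = (\<integral>t\<in>{..x}. g_alpha a t \<partial>lborel)"

text \<open>Selected better entropy (up to additive constant): H_M.\<close>
definition H_M :: "real \<Rightarrow> real \<Rightarrow> real \<Rightarrow> real \<Rightarrow> real" where
  "H_M th1 th2 x1 x2 = ln th1 * (if x1 \<le> x2 then 1 else 0) + ln th2 * (if x1 > x2 then 1 else 0)"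

end

theory Submission
  imports Defs
begin

(* On the event X1 \<le> X2 the variable ln Z1 - H_M equals ln (X1/\<theta>1), and given X1 = x this event
   has probability 1 - G_alpha(x/\<theta>2); substituting z = x/\<theta>1 turns the contribution of this event
   into the integral of ln z (1 - G_alpha((\<theta>1/\<theta>2) z)) g_alpha(z). The event X1 > X2 gives the same
   with the roles of \<theta>1 and \<theta>2 exchanged, and of the two ratios \<theta>1/\<theta>2, \<theta>2/\<theta>1 one is \<rho> and the
   other 1/\<rho>. Integrability comes from |ln x| \<le> (2/a) x^(-a/2) + x, which bounds g_alpha a x |ln x|
   by gamma densities of shapes a/2 and a+1. *)

lemma borel_measurable_gamma_dens[measurable]: "gamma_dens a th \<in> borel_measurable borel"
  unfolding gamma_dens_def by measurable

lemma borel_measurable_g_alpha[measurable]: "g_alpha a \<in> borel_measurable borel"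
  unfolding g_alpha_def by measurable

lemma gamma_dens_nonneg: "a > 0 \<Longrightarrow> th > 0 \<Longrightarrow> 0 \<le> gamma_dens a th x"
  unfolding gamma_dens_def using Gamma_real_pos[of a] by auto

lemma g_alpha_nonneg: "a > 0 \<Longrightarrow> 0 \<le> g_alpha a x"
  unfolding g_alpha_def using gamma_dens_nonneg by auto

lemma g_alpha_eq: "a > 0 \<Longrightarrow> g_alpha a x = indicator {0..} x * x powr (a - 1) / exp x / Gamma a"
  unfolding g_alpha_def gamma_dens_def
  by (auto simp: indicator_def exp_minus field_simps)

lemma gamma_dens_scale: "th > 0 \<Longrightarrow> gamma_dens a th x = g_alpha a (x / th) / th"
proof (cases "x > 0")
  case True
  assume th: "th > 0"
  have "(x / th) powr (a - 1) = th * x powr (a - 1) / th powr a"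
    using True th by (simp add: powr_divide powr_diff field_simps)
  then show ?thesis using True th unfolding g_alpha_def gamma_dens_def
    by simp
qed (auto simp: g_alpha_def gamma_dens_def zero_less_divide_iff)

lemma has_bochner_integral_g_alpha:
  assumes a: "a > 0"
  shows "has_bochner_integral lborel (g_alpha a) 1"
proof -
  have G: "Gamma a > 0" using Gamma_real_pos a by auto
  have "(\<integral>\<^sup>+x. ennreal (g_alpha a x) \<partial>lborel)
      = (\<integral>\<^sup>+x. ennreal (indicator {0..} x * x powr (a - 1) / exp x) / ennreal (Gamma a) \<partial>lborel)"
    using a G by (intro nn_integral_cong) (simp add: g_alpha_eq divide_ennreal)
  also have "\<dots> = (\<integral>\<^sup>+x. ennreal (indicator {0..} x * x powr (a - 1) / exp x) \<partial>lborel) / ennreal (Gamma a)"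
    by (rule nn_integral_divide) measurable
  also have "\<dots> = ennreal (Gamma a) / ennreal (Gamma a)"
    using Gamma_conv_nn_integral_real[OF a] by simp
  also have "\<dots> = 1"
    using G by (simp add: divide_ennreal[symmetric])
  finally show ?thesis
    by (intro has_bochner_integral_nn_integral) (auto simp: g_alpha_nonneg a)
qed

lemma integrable_g_alpha: "a > 0 \<Longrightarrow> integrable lborel (g_alpha a)"
  using has_bochner_integral_g_alpha by (auto simp: has_bochner_integral_iff)

lemma integral_g_alpha: "a > 0 \<Longrightarrow> integral\<^sup>L lborel (g_alpha a) = 1"
  using has_bochner_integral_g_alpha by (auto simp: has_bochner_integral_iff)

lemma integrable_gamma_dens:
  assumes a: "a > 0" and th: "th > 0"
  shows "integrable lborel (gamma_dens a th)"
proof -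
  have "integrable lborel (\<lambda>x. g_alpha a (0 + (1/th) * x))"
    using th by (intro lborel_integrable_real_affine integrable_g_alpha a) auto
  then show ?thesis using th by (simp add: gamma_dens_scale[OF th, abs_def])
qed

lemma abs_ln_le_powr:
  assumes x: "(x::real) > 0" and a: "a > 0"
  shows "\<bar>ln x\<bar> \<le> (2/a) * x powr (-a/2) + x"
proof (cases "x \<ge> 1")
  case True
  have "0 \<le> (2/a) * x powr (-a/2)" using a by simp
  then show ?thesis using ln_le_minus_one[of x] True by simp
next
  case False
  have "ln (x powr (-a/2)) \<le> x powr (-a/2) - 1" using x by (intro ln_le_minus_one) simp
  then have "(-a/2) * ln x \<le> x powr (-a/2)" using x by (simp add: ln_powr)
  then have "- ln x \<le> (2/a) * x powr (-a/2)" using a by (simp add: field_simps)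
  moreover have "ln x \<le> 0" using False x by simp
  ultimately show ?thesis using x by simp
qed

lemma integrable_g_alpha_ln:
  assumes a: "a > 0"
  shows "integrable lborel (\<lambda>x. g_alpha a x * ln x)"
proof -
  define C1 where "C1 = (2/a) * Gamma (a/2) / Gamma a"
  define C2 where "C2 = Gamma (a+1) / Gamma a"
  have "Gamma a > 0" "Gamma (a/2) > 0" "Gamma (a+1) > 0"
    using a by (auto intro: Gamma_real_pos)
  then have Gn: "Gamma a \<noteq> 0" "Gamma (a/2) \<noteq> 0" "Gamma (a+1) \<noteq> 0" by auto
  have bound: "\<bar>g_alpha a x * ln x\<bar> \<le> C1 * g_alpha (a/2) x + C2 * g_alpha (a+1) x" for x
  proof (cases "x > 0")
    case False
    then show ?thesis unfolding g_alpha_def gamma_dens_def by simp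
  next
    case True
    have e1: "g_alpha a x * x powr (-a/2) = g_alpha (a/2) x * (Gamma (a/2) / Gamma a)"
      using True a Gn by (simp add: g_alpha_eq powr_add[symmetric] field_simps)
    have e2: "g_alpha a x * x = g_alpha (a+1) x * (Gamma (a+1) / Gamma a)"
      using True a Gn by (simp add: g_alpha_eq powr_mult_base field_simps)
    have "\<bar>g_alpha a x * ln x\<bar> = g_alpha a x * \<bar>ln x\<bar>"
      using g_alpha_nonneg[OF a] by (simp add: abs_mult)
    also have "\<dots> \<le> g_alpha a x * ((2/a) * x powr (-a/2) + x)"
      using abs_ln_le_powr[OF True a] g_alpha_nonneg[OF a] by (intro mult_left_mono) auto
    also have "\<dots> = (2/a) * (g_alpha a x * x powr (-a/2)) + g_alpha a x * x"
      by (simp add: algebra_simps)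
    also have "\<dots> = C1 * g_alpha (a/2) x + C2 * g_alpha (a+1) x"
      unfolding e1 e2 C1_def C2_def by (simp add: algebra_simps)
    finally show ?thesis .
  qed
  have "integrable lborel (\<lambda>x. C1 * g_alpha (a/2) x + C2 * g_alpha (a+1) x)"
    using a by (intro Bochner_Integration.integrable_add integrable_mult_right integrable_g_alpha) auto
  then show ?thesis
    by (rule Bochner_Integration.integrable_bound) (auto intro!: AE_I2 order_trans[OF bound])
qed

lemma integrable_gamma_dens_ln:
  assumes a: "a > 0" and th: "th > 0"
  shows "integrable lborel (\<lambda>x. gamma_dens a th x * (ln x - ln th))"
proof -
  have "integrable lborel (\<lambda>x. (\<lambda>u. g_alpha a u * ln u) (0 + (1/th) * x) / th)"
    using th by (intro integrable_divide lborel_integrable_real_affine integrable_g_alpha_ln a) auto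
  also have "(\<lambda>x. (\<lambda>u. g_alpha a u * ln u) (0 + (1/th) * x) / th) = (\<lambda>x. gamma_dens a th x * (ln x - ln th))"
  proof
    fix x :: real
    show "(\<lambda>u. g_alpha a u * ln u) (0 + (1/th) * x) / th = gamma_dens a th x * (ln x - ln th)"
    proof (cases "x > 0")
      case True then show ?thesis using th by (simp add: gamma_dens_scale[OF th] ln_div)
    next
      case False then show ?thesis using th
        by (simp add: gamma_dens_def g_alpha_def zero_less_divide_iff zero_less_mult_iff)
    qed
  qed
  finally show ?thesis .
qed

lemma integral_g_alpha_greaterThan:
  assumes a: "a > 0"
  shows "(\<integral>u. g_alpha a u * indicator {t<..} u \<partial>lborel) = 1 - G_alpha a t"
proof -
  have "(\<lambda>u. g_alpha a u * indicator {t<..} u) = (\<lambda>u. g_alpha a u - g_alpha a u * indicator {..t} u)"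
    by (auto simp: fun_eq_iff indicator_def)
  then have "(\<integral>u. g_alpha a u * indicator {t<..} u \<partial>lborel) = 1 - (\<integral>u. g_alpha a u * indicator {..t} u \<partial>lborel)"
    using integrable_g_alpha[OF a] integral_g_alpha[OF a]
    by (simp add: Bochner_Integration.integral_diff integrable_real_mult_indicator)
  also have "(\<integral>u. g_alpha a u * indicator {..t} u \<partial>lborel) = G_alpha a t"
    unfolding G_alpha_def set_lebesgue_integral_def by (simp add: mult.commute)
  finally show ?thesis .
qed

lemma integral_gamma_dens_greaterThan:
  assumes a: "a > 0" and th: "th > 0"
  shows "(\<integral>y. gamma_dens a th y * indicator {x<..} y \<partial>lborel) = 1 - G_alpha a (x / th)"
proof -
  have "(\<integral>y. gamma_dens a th y * indicator {x<..} y \<partial>lborel)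
     = \<bar>th\<bar> *\<^sub>R (\<integral>u. gamma_dens a th (0 + th * u) * indicator {x<..} (0 + th * u) \<partial>lborel)"
    using th by (intro lborel_integral_real_affine) auto
  also have "\<dots> = th * (\<integral>u. g_alpha a u * indicator {x/th<..} u / th \<partial>lborel)"
    unfolding real_scaleR_def using th
    by (intro arg_cong2[where f="(*)"] Bochner_Integration.integral_cong refl)
       (auto simp: gamma_dens_scale[OF th] indicator_def pos_divide_less_eq mult.commute)
  also have "\<dots> = 1 - G_alpha a (x / th)"
    using th integral_g_alpha_greaterThan[OF a] by simp
  finally show ?thesis .
qed

lemma integral_gamma_dens_ln_substitution:
  assumes a: "a > 0" and th: "th > 0"
  shows "(\<integral>x. gamma_dens a th x * (ln x - ln th) * \<phi> (x / th) \<partial>lborel)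
       = (\<integral>z\<in>{0<..}. ln z * \<phi> z * g_alpha a z \<partial>lborel)"
proof -
  have "(\<integral>x. gamma_dens a th x * (ln x - ln th) * \<phi> (x / th) \<partial>lborel)
     = \<bar>th\<bar> *\<^sub>R (\<integral>z. gamma_dens a th (0 + th * z) * (ln (0 + th * z) - ln th) * \<phi> ((0 + th * z) / th) \<partial>lborel)"
    using th by (intro lborel_integral_real_affine) auto
  also have "\<dots> = th * (\<integral>z. indicator {0<..} z * (ln z * \<phi> z * g_alpha a z) / th \<partial>lborel)"
    unfolding real_scaleR_def
  proof (intro arg_cong2[where f="(*)"] Bochner_Integration.integral_cong refl)
    fix z :: real
    show "gamma_dens a th (0 + th * z) * (ln (0 + th * z) - ln th) * \<phi> ((0 + th * z) / th)
       = indicator {0<..} z * (ln z * \<phi> z * g_alpha a z) / th"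
    proof (cases "z > 0")
      case True then show ?thesis using th by (simp add: gamma_dens_scale[OF th] ln_mult)
    next
      case False then show ?thesis using th by (simp add: gamma_dens_def zero_less_mult_iff)
    qed
  qed (use th in simp)
  also have "\<dots> = (\<integral>z\<in>{0<..}. ln z * \<phi> z * g_alpha a z \<partial>lborel)"
    using th unfolding set_lebesgue_integral_def by simp
  finally show ?thesis .
qed

lemma (in pair_sigma_finite) integrable_product_mult:
  fixes f g :: "_ \<Rightarrow> real"
  assumes f: "integrable M1 f" and g: "integrable M2 g"
  shows "integrable (M1 \<Otimes>\<^sub>M M2) (\<lambda>(x, y). f x * g y)"
proof (rule Fubini_integrable)
  show "(\<lambda>(x, y). f x * g y) \<in> borel_measurable (M1 \<Otimes>\<^sub>M M2)"
    using f g by measurable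
  show "integrable M1 (\<lambda>x. \<integral>y. norm ((\<lambda>(x, y). f x * g y) (x, y)) \<partial>M2)"
    using f by (simp add: abs_mult)
  show "AE x in M1. integrable M2 (\<lambda>y. (\<lambda>(x, y). f x * g y) (x, y))"
    using g by simp
qed

lemma (in pair_sigma_finite) integral_product_mult_indicator:
  fixes f g :: "_ \<Rightarrow> real"
  assumes f: "integrable M1 f" and g: "integrable M2 g" and S: "S \<in> sets (M1 \<Otimes>\<^sub>M M2)"
  shows "integrable (M1 \<Otimes>\<^sub>M M2) (\<lambda>(x, y). f x * g y * indicator S (x, y))"
    and "(\<integral>(x, y). f x * g y * indicator S (x, y) \<partial>(M1 \<Otimes>\<^sub>M M2))
           = (\<integral>x. f x * (\<integral>y. g y * indicator S (x, y) \<partial>M2) \<partial>M1)"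
proof -
  show int: "integrable (M1 \<Otimes>\<^sub>M M2) (\<lambda>(x, y). f x * g y * indicator S (x, y))"
  proof (rule Bochner_Integration.integrable_bound)
    show "integrable (M1 \<Otimes>\<^sub>M M2) (\<lambda>(x, y). f x * g y)"
      using f g by (rule integrable_product_mult)
    show "(\<lambda>(x, y). f x * g y * indicator S (x, y)) \<in> borel_measurable (M1 \<Otimes>\<^sub>M M2)"
      using f g S by measurable
  qed (auto simp: indicator_def)
  then show "(\<integral>(x, y). f x * g y * indicator S (x, y) \<partial>(M1 \<Otimes>\<^sub>M M2))
           = (\<integral>x. f x * (\<integral>y. g y * indicator S (x, y) \<partial>M2) \<partial>M1)"
    by (simp only: integral_fst'[OF int, symmetric] case_prod_conv) (simp add: mult.assoc)
qed

text \<open>The contribution of the event \<open>X1 \<le> X2\<close>, and with the roles swapped of \<open>X2 < X1\<close>; this is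
  why \<open>S\<close> is only required to agree with \<open>{x < y}\<close> off the null diagonal.\<close>
lemma integral_gamma_dens_ln_tail:
  assumes a: "a > 0" and th: "th > 0" and th': "th' > 0"
    and S[measurable]: "S \<in> sets (lborel \<Otimes>\<^sub>M lborel)"
    and S_ae: "\<And>x. AE y in lborel. indicator S (x, y) = (indicator {x<..} y :: real)"
  shows "integrable (lborel \<Otimes>\<^sub>M lborel)
           (\<lambda>(x, y). gamma_dens a th x * (ln x - ln th) * gamma_dens a th' y * indicator S (x, y))"
    and "(\<integral>(x, y). gamma_dens a th x * (ln x - ln th) * gamma_dens a th' y * indicator S (x, y)
            \<partial>(lborel \<Otimes>\<^sub>M lborel))
         = (\<integral>z\<in>{0<..}. ln z * (1 - G_alpha a (th / th' * z)) * g_alpha a z \<partial>lborel)"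
proof -
  note fubini = lborel_pair.integral_product_mult_indicator
    [OF integrable_gamma_dens_ln[OF a th] integrable_gamma_dens[OF a th'] S]
  show "integrable (lborel \<Otimes>\<^sub>M lborel)
          (\<lambda>(x, y). gamma_dens a th x * (ln x - ln th) * gamma_dens a th' y * indicator S (x, y))"
    by (rule fubini(1))
  have tail: "(\<integral>y. gamma_dens a th' y * indicator S (x, y) \<partial>lborel) = 1 - G_alpha a (th / th' * (x / th))"
    for x
  proof -
    have "(\<integral>y. gamma_dens a th' y * indicator S (x, y) \<partial>lborel)
        = (\<integral>y. gamma_dens a th' y * indicator {x<..} y \<partial>lborel)"
      by (intro integral_cong_AE) (use S_ae[of x] in auto)
    then show ?thesis using integral_gamma_dens_greaterThan[OF a th'] th by simp
  qed
  show "(\<integral>(x, y). gamma_dens a th x * (ln x - ln th) * gamma_dens a th' y * indicator S (x, y)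
          \<partial>(lborel \<Otimes>\<^sub>M lborel))
        = (\<integral>z\<in>{0<..}. ln z * (1 - G_alpha a (th / th' * z)) * g_alpha a z \<partial>lborel)"
    unfolding fubini(2) tail
    by (rule integral_gamma_dens_ln_substitution[OF a th, where \<phi>="\<lambda>z. 1 - G_alpha a (th / th' * z)"])
qed

lemma (in prob_space) distributed_indep_pair:
  fixes X Y :: "'a \<Rightarrow> real"
  assumes X: "distributed M lborel X (\<lambda>x. ennreal (f x))"
    and Y: "distributed M lborel Y (\<lambda>y. ennreal (g y))"
    and indep: "indep_var borel X borel Y"
    and f: "\<And>x. 0 \<le> f x" and g: "\<And>y. 0 \<le> g y"
  shows "distributed M (lborel \<Otimes>\<^sub>M lborel) (\<lambda>\<omega>. (X \<omega>, Y \<omega>)) (\<lambda>z. ennreal (f (fst z) * g (snd z)))"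
proof -
  \<comment> \<open>independence only depends on the \<sigma>-algebras, and \<open>sets lborel = sets borel\<close>\<close>
  have "(case i of True \<Rightarrow> lborel | False \<Rightarrow> lborel) = (lborel :: real measure)"
   and "(case i of True \<Rightarrow> borel | False \<Rightarrow> borel) = (borel :: real measure)" for i
    by (cases i; simp)+
  then have "indep_var lborel X lborel Y"
    using indep unfolding indep_var_def indep_vars_def by (simp add: measurable_lborel2)
  moreover have "(\<lambda>z. ennreal (f (fst z) * g (snd z))) = (\<lambda>(x, y). ennreal (f x) * ennreal (g y))"
    using f g by (auto simp: ennreal_mult)
  ultimately show ?thesis
    using distributed_joint_indep[OF sigma_finite_lborel sigma_finite_lborel X Y] by simp
qed

lemma ln_min_diff_H_M:
  "ln (min x y) - H_M th1 th2 x y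
     = (ln x - ln th1) * indicator {(u, v). u \<le> v} (x, y) + (ln y - ln th2) * indicator {(u, v). u < v} (y, x)"
  by (auto simp: H_M_def indicator_def min_def)

lemma (in prob_space) expectation_ln_min_diff_H_M:
  fixes X1 X2 :: "'a \<Rightarrow> real"
  assumes a: "\<alpha> > 0" and t1: "\<theta>1 > 0" and t2: "\<theta>2 > 0"
    and X1: "distributed M lborel X1 (\<lambda>x. ennreal (gamma_dens \<alpha> \<theta>1 x))"
    and X2: "distributed M lborel X2 (\<lambda>x. ennreal (gamma_dens \<alpha> \<theta>2 x))"
    and indep: "indep_var borel X1 borel X2"
  shows "expectation (\<lambda>\<omega>. ln (min (X1 \<omega>) (X2 \<omega>)) - H_M \<theta>1 \<theta>2 (X1 \<omega>) (X2 \<omega>))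
     = (\<integral>z\<in>{0<..}. ln z * (1 - G_alpha \<alpha> (\<theta>1 / \<theta>2 * z)) * g_alpha \<alpha> z \<partial>lborel)
     + (\<integral>z\<in>{0<..}. ln z * (1 - G_alpha \<alpha> (\<theta>2 / \<theta>1 * z)) * g_alpha \<alpha> z \<partial>lborel)"
proof -
  define p1 where "p1 = gamma_dens \<alpha> \<theta>1"
  define p2 where "p2 = gamma_dens \<alpha> \<theta>2"
  define A where "A = (\<lambda>(x, y). p1 x * (ln x - ln \<theta>1) * p2 y * indicator {(u, v). u \<le> v} (x, y))"
  define B where "B = (\<lambda>(y, x). p2 y * (ln y - ln \<theta>2) * p1 x * indicator {(u, v). u < v} (y, x))"
  have le_ae: "AE y in lborel. indicator {(u, v). u \<le> v} (x, y) = (indicator {x<..} y :: real)" for x :: real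
    by (rule eventually_mono[OF AE_lborel_singleton[of x]]) (auto simp: indicator_def)
  have lt_ae: "AE x in lborel. indicator {(u, v). u < v} (y, x) = (indicator {y<..} x :: real)" for y :: real
    by (simp add: indicator_def)
  have le_sets: "{(u, v). u \<le> v} \<in> sets (lborel \<Otimes>\<^sub>M (lborel :: real measure))"
    unfolding sets_pair_measure_cong[OF sets_lborel sets_lborel] borel_prod
    using closed_subdiagonal[where 'a=real] by simp
  have lt_sets: "{(u, v). u < v} \<in> sets (lborel \<Otimes>\<^sub>M (lborel :: real measure))"
    unfolding sets_pair_measure_cong[OF sets_lborel sets_lborel] borel_prod
    using open_subdiagonal[where 'a=real] by simp
  note A_int = integral_gamma_dens_ln_tail[OF a t1 t2 le_sets le_ae, folded p1_def p2_def, folded A_def]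
  note B_int = integral_gamma_dens_ln_tail[OF a t2 t1 lt_sets lt_ae, folded p1_def p2_def, folded B_def]
  have [measurable]: "B \<in> borel_measurable (lborel \<Otimes>\<^sub>M lborel)"
    using B_int(1) by auto
  have D: "distributed M (lborel \<Otimes>\<^sub>M lborel) (\<lambda>\<omega>. (X1 \<omega>, X2 \<omega>)) (\<lambda>z. ennreal (p1 (fst z) * p2 (snd z)))"
    using distributed_indep_pair[OF X1 X2 indep] gamma_dens_nonneg a t1 t2 unfolding p1_def p2_def
    by blast
  have "expectation (\<lambda>\<omega>. ln (min (X1 \<omega>) (X2 \<omega>)) - H_M \<theta>1 \<theta>2 (X1 \<omega>) (X2 \<omega>))
      = (\<integral>z. p1 (fst z) * p2 (snd z) * (ln (min (fst z) (snd z)) - H_M \<theta>1 \<theta>2 (fst z) (snd z))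
           \<partial>(lborel \<Otimes>\<^sub>M lborel))"
    by (subst distributed_integral[OF D, of "\<lambda>z. ln (min (fst z) (snd z)) - H_M \<theta>1 \<theta>2 (fst z) (snd z)"])
       (auto simp: H_M_def p1_def p2_def a t1 t2 gamma_dens_nonneg)
  also have "\<dots> = (\<integral>z. A z + (\<lambda>(x, y). B (y, x)) z \<partial>(lborel \<Otimes>\<^sub>M lborel))"
    unfolding ln_min_diff_H_M A_def B_def by (simp add: case_prod_beta algebra_simps)
  also have "\<dots> = integral\<^sup>L (lborel \<Otimes>\<^sub>M lborel) A + (\<integral>(x, y). B (y, x) \<partial>(lborel \<Otimes>\<^sub>M lborel))"
    by (rule Bochner_Integration.integral_add[OF A_int(1) lborel_pair.integrable_product_swap[OF B_int(1)]])
  also have "(\<integral>(x, y). B (y, x) \<partial>(lborel \<Otimes>\<^sub>M lborel)) = integral\<^sup>L (lborel \<Otimes>\<^sub>M lborel) B"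
    by (rule lborel_pair.integral_product_swap) measurable
  finally show ?thesis
    using A_int(2) B_int(2) by simp
qed

theorem lemma3p1:
  fixes M :: "'s measure" and X1 X2 :: "'s \<Rightarrow> real" and \<alpha> \<theta>1 \<theta>2 :: real
  assumes "prob_space M"
    and "\<alpha> > 0" and "\<theta>1 > 0" and "\<theta>2 > 0"
    and "distributed M lborel X1 (\<lambda>x. ennreal (gamma_dens \<alpha> \<theta>1 x))"
    and "distributed M lborel X2 (\<lambda>x. ennreal (gamma_dens \<alpha> \<theta>2 x))"
    and "prob_space.indep_var M borel X1 borel X2"
  shows "let \<rho> = min \<theta>1 \<theta>2 / max \<theta>1 \<theta>2 in
    prob_space.expectation M
      (\<lambda>\<omega>. ln (min (X1 \<omega>) (X2 \<omega>)) - H_M \<theta>1 \<theta>2 (X1 \<omega>) (X2 \<omega>))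
    = (\<integral>z\<in>{0<..}. ln z * (1 - G_alpha \<alpha> (\<rho> * z)) * g_alpha \<alpha> z \<partial>lborel)
    + (\<integral>z\<in>{0<..}. ln z * (1 - G_alpha \<alpha> (z / \<rho>)) * g_alpha \<alpha> z \<partial>lborel)"
proof -
  interpret prob_space M by fact
  note expectation = expectation_ln_min_diff_H_M[OF assms(2-7)]
  show ?thesis
  proof (cases "\<theta>1 \<le> \<theta>2")
    case True
    then have \<rho>: "min \<theta>1 \<theta>2 / max \<theta>1 \<theta>2 = \<theta>1 / \<theta>2"
      and inv: "\<And>z. z / (\<theta>1 / \<theta>2) = \<theta>2 / \<theta>1 * z"
      by simp_all
    show ?thesis unfolding Let_def \<rho> inv using expectation by linarith
  next
    case False
    then have \<rho>: "min \<theta>1 \<theta>2 / max \<theta>1 \<theta>2 = \<theta>2 / \<theta>1"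
      and inv: "\<And>z. z / (\<theta>2 / \<theta>1) = \<theta>1 / \<theta>2 * z"
      by simp_all
    show ?thesis unfolding Let_def \<rho> inv using expectation by linarith
  qed
qed

end
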